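(* Let $F\in\mathbb{C}^{n\times n}$ be an orthonormal (unitary) matrix such that every entry satisfies $|F_{ij}|\le\alpha/\sqrt{n}$ for an absolute constant $\alpha$. Then there is a constant $c>0$ depending only on $\alpha$ such that if $t\le c\,n/k$, the matrix $M=[F^{-1}\;\; I]\in\mathbb{C}^{n\times 2n}$ satisfies the $((3k,3t),\delta)$-RIP with $\delta\le 0.1$; that is, for every $v=\begin{bmatrix}\hat{x}\\ e\end{bmatrix}\in\mathbb{C}^{2n}$ with $\hat{x}\in\mathbb{C}^n$ $3k$-sparse and $e\in\mathbb{C}^n$ $3t$-sparse, $$(1-\delta)\|v\|\le\|Mv\|\le(1+\delta)\|v\|.$$
   Context: $\|\cdot\|$ denotes the Euclidean norm. A vector is $k$-sparse if it has at most $k$ nonzero entries. $I$ is the $n\times n$ identity matrix and $Mv=F^{-1}\hat{x}+e$. *)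

theory Defs
  imports "HOL-Analysis.Analysis"
begin

text \<open>n x n complex matrices are functions nat => nat => complex, only entries with
  indices < n matter; vectors in C^n are functions nat => complex on indices < n.\<close>

definition unitary_mat :: "nat \<Rightarrow> (nat \<Rightarrow> nat \<Rightarrow> complex) \<Rightarrow> bool" where
  "unitary_mat n F \<longleftrightarrow>
     (\<forall>i<n. \<forall>j<n. (\<Sum>l<n. cnj (F l i) * F l j) = (if i = j then 1 else 0)) \<and>
     (\<forall>i<n. \<forall>j<n. (\<Sum>l<n. F i l * cnj (F j l)) = (if i = j then 1 else 0))"

definition mat_mult :: "nat \<Rightarrow> (nat \<Rightarrow> nat \<Rightarrow> complex) \<Rightarrow> (nat \<Rightarrow> nat \<Rightarrow> complex) \<Rightarrow> nat \<Rightarrow> nat \<Rightarrow> complex" where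
  "mat_mult n A B = (\<lambda>i j. \<Sum>l<n. A i l * B l j)"

definition is_inverse_mat :: "nat \<Rightarrow> (nat \<Rightarrow> nat \<Rightarrow> complex) \<Rightarrow> (nat \<Rightarrow> nat \<Rightarrow> complex) \<Rightarrow> bool" where
  "is_inverse_mat n G F \<longleftrightarrow>
     (\<forall>i<n. \<forall>j<n. mat_mult n G F i j = (if i = j then 1 else 0)) \<and>
     (\<forall>i<n. \<forall>j<n. mat_mult n F G i j = (if i = j then 1 else 0))"

definition sparse :: "nat \<Rightarrow> nat \<Rightarrow> (nat \<Rightarrow> complex) \<Rightarrow> bool" where
  "sparse n s x \<longleftrightarrow> card {i. i < n \<and> x i \<noteq> 0} \<le> s"

definition mat_vec :: "nat \<Rightarrow> (nat \<Rightarrow> nat \<Rightarrow> complex) \<Rightarrow> (nat \<Rightarrow> complex) \<Rightarrow> nat \<Rightarrow> complex" where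
  "mat_vec n A x = (\<lambda>i. \<Sum>j<n. A i j * x j)"

definition vnorm :: "nat \<Rightarrow> (nat \<Rightarrow> complex) \<Rightarrow> real" where
  "vnorm n x = sqrt (\<Sum>i<n. (cmod (x i))\<^sup>2)"

definition vnorm2 :: "nat \<Rightarrow> (nat \<Rightarrow> complex) \<Rightarrow> (nat \<Rightarrow> complex) \<Rightarrow> real" where
  "vnorm2 n x e = sqrt ((\<Sum>i<n. (cmod (x i))\<^sup>2) + (\<Sum>i<n. (cmod (e i))\<^sup>2))"

end

theory Submission
  imports Defs
begin

text \<open>The inverse G of the unitary F is its conjugate transpose, hence unitary with the same
  entry bound. Unitarity gives \<open>\<parallel>Gx\<parallel> = \<parallel>x\<parallel>\<close>, so
  \<open>\<parallel>Gx + e\<parallel>\<^sup>2 = \<parallel>x\<parallel>\<^sup>2 + \<parallel>e\<parallel>\<^sup>2 + 2 Re \<langle>Gx, e\<rangle>\<close>, and only the cross term has to be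
  controlled. It lives on the support T of e, and each coordinate of Gx is at most
  \<open>(\<alpha>/\<surd>n) \<surd>|S| \<parallel>x\<parallel>\<close> by Cauchy-Schwarz on the support S of x. Hence
  \<open>|\<langle>Gx, e\<rangle>|\<^sup>2 \<le> (\<alpha>\<^sup>2 |S| |T| / n) \<parallel>x\<parallel>\<^sup>2 \<parallel>e\<parallel>\<^sup>2\<close>, which is small once \<open>|S| |T| \<le> 9 c n\<close>,
  and AM-GM turns this into \<open>2 |Re \<langle>Gx, e\<rangle>| \<le> 0.19 (\<parallel>x\<parallel>\<^sup>2 + \<parallel>e\<parallel>\<^sup>2)\<close>,
  where \<open>0.19 = 1.1\<^sup>2 - 1 = 1 - 0.9\<^sup>2\<close>.\<close>

lemma inverse_of_unitary_mat_eq_adjoint: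
  assumes U: "unitary_mat n F" and I: "is_inverse_mat n G F" and i: "i < n" and j: "j < n"
  shows "G i j = cnj (F j i)"
proof -
  have rows: "\<And>a b. a < n \<Longrightarrow> b < n \<Longrightarrow> (\<Sum>l<n. F a l * cnj (F b l)) = (if a = b then 1 else 0)"
    using U unfolding unitary_mat_def by blast
  have left_inv: "\<And>a b. a < n \<Longrightarrow> b < n \<Longrightarrow> (\<Sum>l<n. G a l * F l b) = (if a = b then 1 else 0)"
    using I unfolding is_inverse_mat_def mat_mult_def by blast
  have "G i j = (\<Sum>l<n. G i l * (if l = j then 1 else 0))"
    using j by (simp add: if_distrib cong: if_cong)
  also have "\<dots> = (\<Sum>l<n. G i l * (\<Sum>m<n. F l m * cnj (F j m)))"
    using rows j by (intro sum.cong) auto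
  also have "\<dots> = (\<Sum>m<n. \<Sum>l<n. G i l * F l m * cnj (F j m))"
    by (subst sum.swap) (simp add: sum_distrib_left mult.assoc)
  also have "\<dots> = (\<Sum>m<n. (\<Sum>l<n. G i l * F l m) * cnj (F j m))"
    by (simp add: sum_distrib_right)
  also have "\<dots> = (\<Sum>m<n. (if m = i then cnj (F j m) else 0))"
    using left_inv i by (intro sum.cong) auto
  also have "\<dots> = cnj (F j i)"
    using i by simp
  finally show ?thesis .
qed

lemma unitary_mat_inverse:
  assumes U: "unitary_mat n F" and I: "is_inverse_mat n G F"
  shows "unitary_mat n G"
proof -
  have G: "\<And>a b. a < n \<Longrightarrow> b < n \<Longrightarrow> G a b = cnj (F b a)"
    using inverse_of_unitary_mat_eq_adjoint[OF U I] by blast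
  have "(\<Sum>l<n. cnj (G l i) * G l j) = cnj (\<Sum>l<n. cnj (F i l) * F j l)" if "i < n" "j < n" for i j
    using that by (simp add: G)
  moreover have "(\<Sum>l<n. G i l * cnj (G j l)) = cnj (\<Sum>l<n. F l i * cnj (F l j))" if "i < n" "j < n" for i j
    using that by (simp add: G mult.commute)
  ultimately show ?thesis
    using U unfolding unitary_mat_def by (auto simp: mult.commute)
qed

lemma unitary_mat_preserves_norm:
  assumes U: "unitary_mat n U"
  shows "(\<Sum>i<n. (cmod (mat_vec n U x i))\<^sup>2) = (\<Sum>i<n. (cmod (x i))\<^sup>2)"
proof -
  have cols: "(\<Sum>i<n. U i j * cnj (U i l)) = (if j = l then 1 else 0)" if "j < n" "l < n" for j l
  proof -
    have "(\<Sum>i<n. U i j * cnj (U i l)) = cnj (\<Sum>i<n. cnj (U i j) * U i l)"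
      by (simp add: mult.commute)
    then show ?thesis
      using U that unfolding unitary_mat_def by simp
  qed
  have "complex_of_real (\<Sum>i<n. (cmod (mat_vec n U x i))\<^sup>2)
      = (\<Sum>i<n. \<Sum>j<n. \<Sum>l<n. (U i j * x j) * (cnj (U i l) * cnj (x l)))"
    by (simp only: of_real_sum complex_norm_square) (simp add: mat_vec_def sum_product)
  also have "\<dots> = (\<Sum>j<n. \<Sum>l<n. \<Sum>i<n. (U i j * x j) * (cnj (U i l) * cnj (x l)))"
    by (subst sum.swap) (intro sum.cong refl sum.swap)
  also have "\<dots> = (\<Sum>j<n. \<Sum>l<n. x j * cnj (x l) * (\<Sum>i<n. U i j * cnj (U i l)))"
    by (simp add: sum_distrib_left mult_ac)
  also have "\<dots> = (\<Sum>j<n. \<Sum>l<n. x j * cnj (x l) * (if j = l then 1 else 0))"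
    using cols by (intro sum.cong refl) simp
  also have "\<dots> = complex_of_real (\<Sum>i<n. (cmod (x i))\<^sup>2)"
    by (simp only: of_real_sum complex_norm_square) (simp add: if_distrib cong: if_cong)
  finally show ?thesis
    using of_real_eq_iff by blast
qed

lemma cmod_mat_vec_sq_le:
  assumes A: "\<And>j. j < n \<Longrightarrow> cmod (A i j) \<le> b"
  shows "(cmod (mat_vec n A x i))\<^sup>2 \<le> b\<^sup>2 * real (card {j. j < n \<and> x j \<noteq> 0}) * (\<Sum>j<n. (cmod (x j))\<^sup>2)"
proof -
  define S where "S = {j. j < n \<and> x j \<noteq> 0}"
  have sum_S: "(\<Sum>j<n. f j) = (\<Sum>j\<in>S. f j)" if "\<And>j. x j = 0 \<Longrightarrow> f j = 0" for f :: "nat \<Rightarrow> real"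
    using that by (intro sum.mono_neutral_right) (auto simp: S_def)
  have "cmod (mat_vec n A x i) \<le> (\<Sum>j<n. cmod (A i j * x j))"
    unfolding mat_vec_def by (rule norm_sum)
  also have "\<dots> \<le> (\<Sum>j<n. b * cmod (x j))"
    using A by (intro sum_mono) (simp add: norm_mult mult_right_mono)
  also have "\<dots> = b * (\<Sum>j\<in>S. cmod (x j))"
    by (simp add: sum_S sum_distrib_left[symmetric])
  finally have "(cmod (mat_vec n A x i))\<^sup>2 \<le> b\<^sup>2 * (\<Sum>j\<in>S. cmod (x j))\<^sup>2"
    by (metis norm_ge_zero power_mono power_mult_distrib)
  also have "\<dots> \<le> b\<^sup>2 * ((\<Sum>j\<in>S. (cmod (x j))\<^sup>2) * real (card S))"
    by (intro mult_left_mono sum_squared_le_sum_of_squares) auto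
  finally show ?thesis
    by (simp add: sum_S S_def[symmetric] mult_ac)
qed

lemma sum_inner_sq_le_on_support:
  fixes y e :: "nat \<Rightarrow> complex"
  shows "(\<Sum>i<n. y i \<bullet> e i)\<^sup>2
    \<le> (\<Sum>i\<in>{i. i < n \<and> e i \<noteq> 0}. (cmod (y i))\<^sup>2) * (\<Sum>i<n. (cmod (e i))\<^sup>2)"
proof -
  define T where "T = {i. i < n \<and> e i \<noteq> 0}"
  have sum_T: "(\<Sum>i<n. f i) = (\<Sum>i\<in>T. f i)" if "\<And>i. e i = 0 \<Longrightarrow> f i = 0" for f :: "nat \<Rightarrow> real"
    using that by (intro sum.mono_neutral_right) (auto simp: T_def)
  have "\<bar>\<Sum>i<n. y i \<bullet> e i\<bar> \<le> (\<Sum>i<n. cmod (y i) * cmod (e i))"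
    by (intro order_trans[OF sum_abs] sum_mono Cauchy_Schwarz_ineq2)
  also have "\<dots> = (\<Sum>i\<in>T. cmod (y i) * cmod (e i))"
    by (simp add: sum_T)
  finally have "(\<Sum>i<n. y i \<bullet> e i)\<^sup>2 \<le> (\<Sum>i\<in>T. cmod (y i) * cmod (e i))\<^sup>2"
    by (metis abs_le_square_iff abs_of_nonneg abs_ge_zero order_trans)
  also have "\<dots> \<le> (\<Sum>i\<in>T. (cmod (y i))\<^sup>2) * (\<Sum>i\<in>T. (cmod (e i))\<^sup>2)"
    by (rule Cauchy_Schwarz_ineq_sum)
  finally show ?thesis
    by (simp add: sum_T T_def[symmetric])
qed

lemma abs_cross_term_le_am_gm:
  fixes X E R \<eta> :: real
  assumes "0 \<le> X" "0 \<le> E" "0 \<le> \<eta>" and R: "R\<^sup>2 \<le> \<eta>\<^sup>2 * X * E"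
  shows "\<bar>2 * R\<bar> \<le> \<eta> * (X + E)"
proof -
  have "4 * (X * E) \<le> (X + E)\<^sup>2"
    using sum_power2_ge_zero[of "X - E" 0] by (simp add: power2_eq_square algebra_simps)
  then have "(2 * R)\<^sup>2 \<le> (\<eta> * (X + E))\<^sup>2"
    using R mult_left_mono[of "4 * (X * E)" "(X + E)\<^sup>2" "\<eta>\<^sup>2"]
    by (simp add: power_mult_distrib mult_ac)
  then have "\<bar>2 * R\<bar> \<le> \<bar>\<eta> * (X + E)\<bar>"
    by (simp only: abs_le_square_iff)
  then show ?thesis
    using assms by simp
qed

lemma sqrt_perturbation_bounds:
  fixes N R \<delta> :: real
  assumes "0 \<le> \<delta>" "\<delta> \<le> 1" "0 \<le> N" and R: "\<bar>2 * R\<bar> \<le> (2 * \<delta> - \<delta>\<^sup>2) * N"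
  shows "(1 - \<delta>) * sqrt N \<le> sqrt (N + 2 * R) \<and> sqrt (N + 2 * R) \<le> (1 + \<delta>) * sqrt N"
proof -
  have "(1 - \<delta>) * sqrt N = sqrt ((1 - \<delta>)\<^sup>2 * N)" and "(1 + \<delta>) * sqrt N = sqrt ((1 + \<delta>)\<^sup>2 * N)"
    using assms by (simp_all add: real_sqrt_mult)
  moreover have "(1 - \<delta>)\<^sup>2 * N \<le> N + 2 * R" and "N + 2 * R \<le> (1 + \<delta>)\<^sup>2 * N"
    using R mult_nonneg_nonneg[OF \<open>0 \<le> N\<close>, of "\<delta> * \<delta>"] \<open>0 \<le> \<delta>\<close>
    unfolding abs_le_iff by (simp_all add: power2_eq_square algebra_simps)
  ultimately show ?thesis
    by (simp add: real_sqrt_le_mono)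
qed

lemma rip_unitary_identity:
  assumes U: "unitary_mat n G" and b: "\<forall>i<n. \<forall>j<n. cmod (G i j) \<le> b"
    and \<delta>: "0 \<le> \<delta>" "\<delta> \<le> 1" and small: "b\<^sup>2 * real s * real r \<le> (2 * \<delta> - \<delta>\<^sup>2)\<^sup>2"
    and x: "sparse n s x" and e: "sparse n r e"
  shows "(1 - \<delta>) * vnorm2 n x e \<le> vnorm n (\<lambda>i. mat_vec n G x i + e i) \<and>
       vnorm n (\<lambda>i. mat_vec n G x i + e i) \<le> (1 + \<delta>) * vnorm2 n x e"
proof -
  define y where "y = mat_vec n G x"
  define X where "X = (\<Sum>i<n. (cmod (x i))\<^sup>2)"
  define E where "E = (\<Sum>i<n. (cmod (e i))\<^sup>2)"
  define R where "R = (\<Sum>i<n. y i \<bullet> e i)"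
  define T where "T = {i. i < n \<and> e i \<noteq> 0}"
  have XE: "0 \<le> X" "0 \<le> E"
    unfolding X_def E_def by (auto intro: sum_nonneg)
  have card_T: "real (card T) \<le> real r"
    using e unfolding sparse_def T_def by simp
  have y_coord: "(cmod (y i))\<^sup>2 \<le> b\<^sup>2 * real s * X" if "i < n" for i
  proof -
    have "(cmod (y i))\<^sup>2 \<le> b\<^sup>2 * real (card {j. j < n \<and> x j \<noteq> 0}) * X"
      unfolding y_def X_def using b that by (intro cmod_mat_vec_sq_le) auto
    also have "\<dots> \<le> b\<^sup>2 * real s * X"
      using x XE unfolding sparse_def by (intro mult_right_mono mult_left_mono) auto
    finally show ?thesis .
  qed
  have "R\<^sup>2 \<le> (\<Sum>i\<in>T. (cmod (y i))\<^sup>2) * E"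
    unfolding R_def T_def E_def by (rule sum_inner_sq_le_on_support)
  also have "\<dots> \<le> (real (card T) * (b\<^sup>2 * real s * X)) * E"
    using y_coord XE sum_mono[of T "\<lambda>i. (cmod (y i))\<^sup>2" "\<lambda>_. b\<^sup>2 * real s * X"]
    by (intro mult_right_mono) (auto simp: T_def)
  also have "\<dots> \<le> (real r * (b\<^sup>2 * real s * X)) * E"
    using card_T XE by (intro mult_right_mono) auto
  also have "\<dots> \<le> (2 * \<delta> - \<delta>\<^sup>2)\<^sup>2 * X * E"
    using small XE mult_right_mono[OF small, of "X * E"] by (simp add: mult_ac)
  moreover have "0 \<le> 2 * \<delta> - \<delta>\<^sup>2"
    using \<delta> mult_right_mono[of \<delta> 1 \<delta>] by (simp add: power2_eq_square)
  ultimately have "\<bar>2 * R\<bar> \<le> (2 * \<delta> - \<delta>\<^sup>2) * (X + E)"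
    using XE by (intro abs_cross_term_le_am_gm) auto
  moreover have "vnorm n (\<lambda>i. mat_vec n G x i + e i) = sqrt (X + E + 2 * R)"
  proof -
    have "(cmod (a + c))\<^sup>2 = (cmod a)\<^sup>2 + (cmod c)\<^sup>2 + 2 * (a \<bullet> c)" for a c :: complex
      unfolding dot_norm by (simp add: field_simps)
    then show ?thesis
      using unitary_mat_preserves_norm[OF U, of x]
      by (simp add: vnorm_def sum.distrib sum_distrib_left X_def E_def R_def y_def)
  qed
  moreover have "vnorm2 n x e = sqrt (X + E)"
    unfolding vnorm2_def X_def E_def ..
  ultimately show ?thesis
    using sqrt_perturbation_bounds[of \<delta> "X + E" R] \<delta> XE by simp
qed

theorem lemma2:
  fixes \<alpha> :: real
  shows "\<exists>c>0. \<forall>(n::nat) F G (k::nat) (t::nat) x e.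
     unitary_mat n F \<and>
     (\<forall>i<n. \<forall>j<n. cmod (F i j) \<le> \<alpha> / sqrt (real n)) \<and>
     is_inverse_mat n G F \<and>
     real t \<le> c * real n / real k \<and>
     sparse n (3 * k) x \<and> sparse n (3 * t) e \<longrightarrow>
       (1 - 0.1) * vnorm2 n x e \<le> vnorm n (\<lambda>i. mat_vec n G x i + e i) \<and>
       vnorm n (\<lambda>i. mat_vec n G x i + e i) \<le> (1 + 0.1) * vnorm2 n x e"
proof -
  define c where "c = 1 / (250 * (\<alpha>\<^sup>2 + 1))"
  have c: "0 < c" "9 * \<alpha>\<^sup>2 * c \<le> (2 * 0.1 - 0.1\<^sup>2)\<^sup>2"
    by (auto simp: c_def add_pos_nonneg field_simps)
  show ?thesis
  proof (rule exI[of _ c], rule conjI[OF \<open>0 < c\<close>], intro allI impI, elim conjE)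
    fix n F G k t x e
    assume U: "unitary_mat n F" and F: "\<forall>i<n. \<forall>j<n. cmod (F i j) \<le> \<alpha> / sqrt (real n)"
      and I: "is_inverse_mat n G F" and tk: "real t \<le> c * real n / real k"
      and x: "sparse n (3 * k) x" and e: "sparse n (3 * t) e"
    have G: "\<forall>i<n. \<forall>j<n. cmod (G i j) \<le> \<alpha> / sqrt (real n)"
      using F inverse_of_unitary_mat_eq_adjoint[OF U I] by simp
    have kt: "real k * real t \<le> c * real n"
      using tk c by (cases "k = 0") (auto simp: field_simps)
    have "(\<alpha> / sqrt (real n))\<^sup>2 * real (3 * k) * real (3 * t) = 9 * (\<alpha>\<^sup>2 / real n) * (real k * real t)"
      by (simp add: power_divide)
    also have "\<dots> \<le> 9 * (\<alpha>\<^sup>2 / real n) * (c * real n)"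
      using kt by (intro mult_left_mono) auto
    also have "\<dots> \<le> 9 * \<alpha>\<^sup>2 * c"
      using c by (cases "n = 0") auto
    finally have "(\<alpha> / sqrt (real n))\<^sup>2 * real (3 * k) * real (3 * t) \<le> 9 * \<alpha>\<^sup>2 * c" .
    then show "(1 - 0.1) * vnorm2 n x e \<le> vnorm n (\<lambda>i. mat_vec n G x i + e i) \<and>
       vnorm n (\<lambda>i. mat_vec n G x i + e i) \<le> (1 + 0.1) * vnorm2 n x e"
      using c(2) by (intro rip_unitary_identity[OF unitary_mat_inverse[OF U I] G _ _ _ x e]) auto
  qed
qed

end
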